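(* Let $X$ be a space, $A\subset X$ and $x\in \operatorname{int}A$, and suppose the boundary $\partial A$ is a C-set in $X$. Then there is a clopen set $C\subset X$ with $x\in C$ and $C\cap\partial A=\varnothing$, and $C\cap\operatorname{int}A=C\cap\overline A$ is clopen in $X$. Consequently a space is rim-C (has a basis of open sets whose boundaries are C-sets) if and only if it is zero-dimensional.
   Context: All spaces are separable and metrizable. A subset $A$ of a space $X$ is a C-set in $X$ if $A$ is an intersection of clopen subsets of $X$ (the empty set counts as a C-set). *)

theory Defs
  imports "HOL-Analysis.Analysis"
begin

text \<open>A C-set in X: an intersection of clopen subsets of X (empty intersection read
  relative to the carrier, so the whole space is a C-set; the empty set is one as well).\<close>
definition c_set :: "'a topology \<Rightarrow> 'a set \<Rightarrow> bool" where
  "c_set X A \<longleftrightarrow> (\<exists>F. (\<forall>C\<in>F. closedin X C \<and> openin X C) \<and> A = topspace X \<inter> \<Inter>F)"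

definition rim_C :: "'a topology \<Rightarrow> bool" where
  "rim_C X \<longleftrightarrow> (\<exists>B. (\<forall>U\<in>B. openin X U \<and> c_set X (X frontier_of U)) \<and>
                    (\<forall>W x. openin X W \<and> x \<in> W \<longrightarrow> (\<exists>U\<in>B. x \<in> U \<and> U \<subseteq> W)))"

end

theory Submission
  imports Defs
begin

text \<open>A point outside a C-set is separated from it by a clopen set, namely the complement of
  one of the clopen sets whose intersection is the C-set. Applied to the boundary of \<open>A\<close> at an
  interior point \<open>x\<close>, this gives a clopen \<open>C \<ni> x\<close> missing \<open>\<partial>A\<close>; on \<open>C\<close> the closure and the interior
  of \<open>A\<close> then agree, so \<open>C \<inter> int A\<close> is both open and closed. For an open \<open>U\<close> with a C-set as
  boundary, \<open>C \<inter> U\<close> is therefore a clopen neighbourhood of \<open>x\<close> inside \<open>U\<close>, so rim-C spaces are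
  zero-dimensional; conversely clopen sets have empty boundary, which is a C-set.\<close>

lemma c_set_empty: "c_set X {}"
  unfolding c_set_def by (rule exI[of _ "{{}}"]) simp

lemma c_set_frontier_of_clopen:
  assumes "closedin X U" "openin X U"
  shows "c_set X (X frontier_of U)"
  using assms clopenin_eq_frontier_of c_set_empty by metis

lemma c_set_separating_clopen:
  assumes "c_set X S" "x \<in> topspace X" "x \<notin> S"
  obtains C where "closedin X C" "openin X C" "x \<in> C" "C \<inter> S = {}"
proof -
  obtain F where F: "\<forall>C\<in>F. closedin X C \<and> openin X C" "S = topspace X \<inter> \<Inter>F"
    using assms(1) unfolding c_set_def by blast
  then obtain C0 where "C0 \<in> F" "x \<notin> C0"
    using assms(2,3) by blast
  with F assms(2) show thesis
    by (intro that[of "topspace X - C0"]) auto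
qed

lemma Int_interior_of_eq_Int_closure_of:
  assumes "C \<inter> X frontier_of A = {}"
  shows "C \<inter> X interior_of A = C \<inter> X closure_of A"
  using assms interior_of_union_frontier_of[of X A] by blast

lemma clopen_neighbourhood_avoiding_c_set_frontier:
  assumes "x \<in> X interior_of A" "c_set X (X frontier_of A)"
  shows "\<exists>C. closedin X C \<and> openin X C \<and> x \<in> C \<and> C \<inter> X frontier_of A = {} \<and>
             C \<inter> X interior_of A = C \<inter> X closure_of A \<and>
             closedin X (C \<inter> X interior_of A) \<and> openin X (C \<inter> X interior_of A)"
proof -
  have "x \<in> topspace X" "x \<notin> X frontier_of A"
    using assms(1) interior_of_subset_topspace[of X A] by (auto simp: frontier_of_def)
  then obtain C where C: "closedin X C" "openin X C" "x \<in> C" "C \<inter> X frontier_of A = {}"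
    using c_set_separating_clopen assms(2) by metis
  have eq: "C \<inter> X interior_of A = C \<inter> X closure_of A"
    using C(4) by (rule Int_interior_of_eq_Int_closure_of)
  have "closedin X (C \<inter> X interior_of A)"
    unfolding eq using C by (simp add: closedin_Int)
  moreover have "openin X (C \<inter> X interior_of A)"
    using C by (simp add: openin_Int)
  ultimately show ?thesis
    using C eq by blast
qed

lemma rim_C_iff_dim_le_0: "rim_C X \<longleftrightarrow> X dim_le 0"
proof
  assume "rim_C X"
  then obtain B where B: "\<forall>U\<in>B. openin X U \<and> c_set X (X frontier_of U)"
    and base: "\<forall>W x. openin X W \<and> x \<in> W \<longrightarrow> (\<exists>U\<in>B. x \<in> U \<and> U \<subseteq> W)"
    unfolding rim_C_def by blast
  have "\<exists>V. closedin X V \<and> openin X V \<and> x \<in> V \<and> V \<subseteq> W"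
    if W: "openin X W" "x \<in> W" for W x
  proof -
    obtain U where U: "U \<in> B" "x \<in> U" "U \<subseteq> W"
      using base W by blast
    then have "openin X U" "c_set X (X frontier_of U)"
      using B by blast+
    then have "X interior_of U = U" "x \<in> X interior_of U"
      using U(2) by (simp_all add: interior_of_openin)
    then obtain C where "closedin X C" "openin X C" "x \<in> C"
      "closedin X (C \<inter> U)" "openin X (C \<inter> U)"
      using clopen_neighbourhood_avoiding_c_set_frontier \<open>c_set X (X frontier_of U)\<close> by metis
    then show ?thesis
      using U(2,3) by (intro exI[of _ "C \<inter> U"]) blast
  qed
  then show "X dim_le 0"
    by (simp add: dimension_le_0_neighbourhood_base_of_clopen open_neighbourhood_base_of)
next
  assume "X dim_le 0"
  then have "\<forall>W x. openin X W \<and> x \<in> W \<longrightarrow> (\<exists>V. closedin X V \<and> openin X V \<and> x \<in> V \<and> V \<subseteq> W)"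
    by (simp add: dimension_le_0_neighbourhood_base_of_clopen open_neighbourhood_base_of)
  then show "rim_C X"
    unfolding rim_C_def
    by (intro exI[of _ "{V. closedin X V \<and> openin X V}"]) (blast intro: c_set_frontier_of_clopen)
qed

theorem mainTheorem5:
  fixes X :: "'a topology"
  assumes "metrizable_space X" and "separable_space X"
  shows "(\<forall>A x. A \<subseteq> topspace X \<and> x \<in> X interior_of A \<and> c_set X (X frontier_of A) \<longrightarrow>
            (\<exists>C. closedin X C \<and> openin X C \<and> x \<in> C \<and> C \<inter> X frontier_of A = {} \<and>
                 C \<inter> X interior_of A = C \<inter> X closure_of A \<and>
                 closedin X (C \<inter> X interior_of A) \<and> openin X (C \<inter> X interior_of A)))
         \<and> (rim_C X \<longleftrightarrow> X dim_le 0)"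
  by (simp add: clopen_neighbourhood_avoiding_c_set_frontier rim_C_iff_dim_le_0)

end
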